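(* Let $G$ be a $3$-graph on $n$ vertices with $4 \mid n$ and $\delta(G) \ge 3n/4-1$. Let $(A,B)$ be a partition of $V(G)$ with $3n/16 < |A| < 5n/16$. Then $G$ contains a copy of $K^3_4$ with an odd number of vertices in both $A$ and $B$.
   Context: A $3$-graph is a set of $3$-element subsets (edges) of a vertex set; $\delta(G)$ is the largest $m$ such that every pair of vertices lies in at least $m$ edges. A copy of $K^3_4$ in $G$ is a $4$-set of vertices all of whose $3$-subsets are edges of $G$. *)

theory Defs
  imports Complex_Main
begin

definition is_3graph :: "'a set \<Rightarrow> 'a set set \<Rightarrow> bool" where
  "is_3graph V G \<longleftrightarrow> (\<forall>e\<in>G. e \<subseteq> V \<and> card e = 3)"

definition codeg :: "'a set set \<Rightarrow> 'a \<Rightarrow> 'a \<Rightarrow> nat" where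
  "codeg G x y = card {e\<in>G. x \<in> e \<and> y \<in> e}"

text \<open>delta(G) >= m: every pair of (distinct) vertices lies in at least m edges.\<close>
definition min_codeg_ge :: "'a set \<Rightarrow> 'a set set \<Rightarrow> real \<Rightarrow> bool" where
  "min_codeg_ge V G m \<longleftrightarrow> (\<forall>x\<in>V. \<forall>y\<in>V. x \<noteq> y \<longrightarrow> real (codeg G x y) \<ge> m)"

definition is_K4 :: "'a set set \<Rightarrow> 'a set \<Rightarrow> bool" where
  "is_K4 G S \<longleftrightarrow> card S = 4 \<and> (\<forall>T. T \<subseteq> S \<and> card T = 3 \<longrightarrow> T \<in> G)"

end

theory Submission
  imports Defs
begin

text \<open>Suppose there is no such copy of \<open>K\<^sup>3\<^sub>4\<close> and write \<open>n = 4m\<close>, so that every pair of vertices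
misses at most \<open>m - 1\<close> vertices of its link. Four vertices spanning a \<open>K\<^sup>3\<^sub>4\<close> with one vertex in
one part and three in the other would be an odd copy, so for every edge \<open>abc\<close> each further
vertex \<open>z\<close> that would complete such a split misses the link of one of the pairs \<open>ab, ac, bc\<close>.
For an edge \<open>xuv\<close> with \<open>x \<in> A\<close> and \<open>u, v \<in> B\<close> this puts \<open>B - {u,v}\<close> and the non-neighbours
of \<open>uv\<close> in \<open>A\<close> into three missing sets, whence \<open>|A - N(u,v)| \<le> |A| - m - 1\<close>. If \<open>|A| \<le> m\<close>,
such an edge exists and the bound is negative. Otherwise every pair in \<open>B\<close> has a neighbour in
\<open>A\<close>, and since \<open>|A| < 3m - 1\<close> there is an edge \<open>uvw\<close> inside \<open>B\<close>; every vertex of \<open>A\<close> misses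
one of the three links, so \<open>|A| \<le> 3(|A| - m - 1)\<close>, contradicting \<open>|A| < 5m/4\<close>.\<close>

definition pair_nbhd :: "'a set \<Rightarrow> 'a set set \<Rightarrow> 'a \<Rightarrow> 'a \<Rightarrow> 'a set" where
  "pair_nbhd V G x y = {z\<in>V. {x,y,z} \<in> G}"

lemma pair_nbhd_subset:
  assumes "is_3graph V G"
  shows "pair_nbhd V G x y \<subseteq> V - {x,y}"
proof
  fix z assume z: "z \<in> pair_nbhd V G x y"
  then have "z \<in> V" and "card {x,y,z} = 3"
    using assms by (auto simp: pair_nbhd_def is_3graph_def)
  then show "z \<in> V - {x,y}" by (auto simp: card_insert_if split: if_splits)
qed

lemma codeg_le_card_pair_nbhd:
  assumes "is_3graph V G" "finite V" "x \<noteq> y"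
  shows "codeg G x y \<le> card (pair_nbhd V G x y)"
proof -
  have "{e\<in>G. x \<in> e \<and> y \<in> e} \<subseteq> (\<lambda>z. {x,y,z}) ` pair_nbhd V G x y"
  proof
    fix e assume e: "e \<in> {e\<in>G. x \<in> e \<and> y \<in> e}"
    then have "card e = 3" "e \<subseteq> V" using assms(1) by (auto simp: is_3graph_def)
    then have "card (e - {x,y}) = 1" using e assms(3) card.infinite
      by (fastforce simp: card_Diff_subset)
    then obtain z where "e - {x,y} = {z}" by (meson card_1_singletonE)
    then have "e = {x,y,z}" using e by blast
    moreover have "z \<in> pair_nbhd V G x y" using e \<open>e \<subseteq> V\<close> \<open>e = {x,y,z}\<close>
      by (auto simp: pair_nbhd_def)
    ultimately show "e \<in> (\<lambda>z. {x,y,z}) ` pair_nbhd V G x y" by blast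
  qed
  then have "codeg G x y \<le> card ((\<lambda>z. {x,y,z}) ` pair_nbhd V G x y)"
    unfolding codeg_def using assms(2) by (intro card_mono) (auto simp: pair_nbhd_def)
  also have "\<dots> \<le> card (pair_nbhd V G x y)" by (rule card_image_le) (simp add: assms(2) pair_nbhd_def)
  finally show ?thesis .
qed

lemma is_K4I:
  assumes "distinct [a,b,c,d]"
    and "{b,c,d} \<in> G" "{a,c,d} \<in> G" "{a,b,d} \<in> G" "{a,b,c} \<in> G"
  shows "is_K4 G {a,b,c,d}"
  unfolding is_K4_def
proof (intro conjI allI impI)
  show "card {a,b,c,d} = 4" using assms(1) by simp
  fix T assume T: "T \<subseteq> {a,b,c,d} \<and> card T = 3"
  have "T \<noteq> {a,b,c,d}"
  proof
    assume "T = {a,b,c,d}"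
    then have "card T = 4" using \<open>card {a,b,c,d} = 4\<close> by (simp only:)
    then show False using T by simp
  qed
  then have "\<not> {a,b,c,d} \<subseteq> T" using T by blast
  then obtain t where t: "t \<in> {a,b,c,d}" "t \<notin> T" by blast
  have "card ({a,b,c,d} - {t}) = 3" using t assms(1) by (simp add: card_Diff_singleton)
  then have "T = {a,b,c,d} - {t}" using T t by (intro card_subset_eq) auto
  then show "T \<in> G" using t assms by (auto simp: insert_Diff_if insert_commute)
qed

lemma is_K4_of_common_pair_nbhd:
  assumes "is_3graph V G" "{a,b,c} \<in> G"
    and "z \<in> pair_nbhd V G a b" "z \<in> pair_nbhd V G a c" "z \<in> pair_nbhd V G b c"
  shows "is_K4 G {a,b,c,z}"
proof (rule is_K4I)
  have "card {a,b,c} = 3" using assms(1,2) by (auto simp: is_3graph_def)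
  moreover have "z \<notin> {a,b,c}" using assms(3,4) pair_nbhd_subset[OF assms(1)] by blast
  ultimately show "distinct [a,b,c,z]" by (auto simp: card_insert_if split: if_splits)
  show "{b,c,z} \<in> G" "{a,c,z} \<in> G" "{a,b,z} \<in> G" "{a,b,c} \<in> G"
    using assms(2-5) by (auto simp: pair_nbhd_def)
qed

locale odd_K4_free =
  fixes V :: "'a set" and G :: "'a set set" and A B :: "'a set" and d :: nat
  assumes finite_V: "finite V" and graph: "is_3graph V G"
    and partition: "A \<union> B = V" and disjoint: "A \<inter> B = {}"
    and codeg_ge: "\<lbrakk>x \<in> V; y \<in> V; x \<noteq> y\<rbrakk> \<Longrightarrow> d \<le> codeg G x y"
    and no_odd_K4: "is_K4 G S \<Longrightarrow> even (card (S \<inter> A)) \<or> even (card (S \<inter> B))"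
begin

abbreviation N :: "'a \<Rightarrow> 'a \<Rightarrow> 'a set" where
  "N \<equiv> pair_nbhd V G"

lemma finite_A: "finite A" and finite_B: "finite B"
  using finite_V partition by (auto intro: finite_subset)

lemma card_A_B: "card A + card B = card V"
  using finite_A finite_B partition disjoint by (metis card_Un_disjoint)

lemma card_pair_nbhd_ge: "\<lbrakk>x \<in> V; y \<in> V; x \<noteq> y\<rbrakk> \<Longrightarrow> d \<le> card (N x y)"
  using codeg_ge codeg_le_card_pair_nbhd[OF graph finite_V] le_trans by blast

lemma card_non_pair_nbhd:
  assumes "x \<in> V" "y \<in> V" "x \<noteq> y"
  shows "card (V - {x,y} - N x y) + d + 2 \<le> card V"
proof -
  have "card (V - {x,y} - N x y) = card (V - {x,y}) - card (N x y)"
    using pair_nbhd_subset[OF graph] finite_V by (intro card_Diff_subset) (auto intro: finite_subset)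
  moreover have "card (V - {x,y}) + 2 = card V"
    using assms finite_V card_mono[OF finite_V, of "{x,y}"] by (simp add: card_Diff_subset)
  moreover have "card (N x y) \<le> card (V - {x,y})"
    using pair_nbhd_subset[OF graph] finite_V by (intro card_mono) auto
  ultimately show ?thesis using card_pair_nbhd_ge[OF assms] by linarith
qed

lemma pair_nbhd_not_subset:
  assumes "x \<in> V" "y \<in> V" "x \<noteq> y" "X \<subseteq> V" "card (X - {x,y}) < d"
  shows "\<not> N x y \<subseteq> X"
proof
  assume "N x y \<subseteq> X"
  then have "N x y \<subseteq> X - {x,y}" using pair_nbhd_subset[OF graph] by blast
  then have "card (N x y) \<le> card (X - {x,y})"
    using assms(4) finite_V by (intro card_mono) (auto intro: finite_subset)
  with assms card_pair_nbhd_ge show False by fastforce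
qed

lemma not_in_common_pair_nbhd:
  assumes "{a,b,c} \<in> G"
    and "odd (card ({a,b,c,z} \<inter> A))" "odd (card ({a,b,c,z} \<inter> B))"
  shows "z \<notin> N a b \<inter> N a c \<inter> N b c"
  using no_odd_K4 is_K4_of_common_pair_nbhd[OF graph assms(1)] assms(2,3) by blast

text \<open>The three missing sets of the edge \<open>xuv\<close> cover \<open>B - {u,v}\<close> and \<open>A - N u v\<close>.\<close>

lemma crossing_edge_bound:
  assumes x: "x \<in> A" and uv: "u \<in> B" "v \<in> B" "u \<noteq> v" and "x \<in> N u v"
  shows "card B + card (A - N u v) + 3 * d + 4 \<le> 3 * card V"
proof -
  have xuv: "x \<in> V" "u \<in> V" "v \<in> V" "x \<noteq> u" "x \<noteq> v"
    using x uv partition disjoint by auto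
  have edge: "{x,u,v} \<in> G" using \<open>x \<in> N u v\<close> by (simp add: pair_nbhd_def insert_commute)
  let ?M = "(V - {x,u} - N x u) \<union> (V - {x,v} - N x v) \<union> (V - {u,v} - N u v)"
  have cover: "(B - {u,v}) \<union> (A - N u v) \<subseteq> ?M"
  proof
    fix z assume z: "z \<in> (B - {u,v}) \<union> (A - N u v)"
    show "z \<in> ?M"
    proof (cases "z \<in> A")
      case True
      then show ?thesis using z uv partition disjoint by auto
    next
      case False
      then have "{x,u,v,z} \<inter> A = {x}" "{x,u,v,z} \<inter> B = {u,v,z}" "card {u,v,z} = 3"
        using x uv z partition disjoint by auto
      then have "z \<notin> N x u \<inter> N x v \<inter> N u v"
        using not_in_common_pair_nbhd[OF edge] by simp
      then show ?thesis using z False x partition by auto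
    qed
  qed
  have "card (B - {u,v}) + card (A - N u v) = card ((B - {u,v}) \<union> (A - N u v))"
    using finite_A finite_B disjoint by (intro card_Un_disjoint[symmetric]) auto
  also have "\<dots> \<le> card ?M"
    using cover finite_V by (intro card_mono) auto
  also have "\<dots> \<le> card (V - {x,u} - N x u) + card (V - {x,v} - N x v) + card (V - {u,v} - N u v)"
    by (meson card_Un_le add_le_mono order_trans le_refl)
  finally have "card (B - {u,v}) + card (A - N u v)
      \<le> card (V - {x,u} - N x u) + card (V - {x,v} - N x v) + card (V - {u,v} - N u v)" .
  moreover have "card (B - {u,v}) + 2 = card B"
    using uv finite_B card_mono[OF finite_B, of "{u,v}"] by (simp add: card_Diff_subset)
  ultimately show ?thesis
    using card_non_pair_nbhd[OF xuv(1,2,4)] card_non_pair_nbhd[OF xuv(1,3,5)]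
      card_non_pair_nbhd[OF xuv(2,3) uv(3)]
    by linarith
qed

lemma pair_in_B_bound:
  assumes uv: "u \<in> B" "v \<in> B" "u \<noteq> v" and "card B < d + 2"
  shows "card B + card (A - N u v) + 3 * d + 4 \<le> 3 * card V"
proof -
  have "card (B - {u,v}) < d"
    using assms finite_B card_mono[OF finite_B, of "{u,v}"] by (simp add: card_Diff_subset)
  then have "\<not> N u v \<subseteq> B" using uv partition by (intro pair_nbhd_not_subset) auto
  then obtain x where "x \<in> A" "x \<in> N u v"
    using pair_nbhd_subset[OF graph] partition by blast
  then show ?thesis using crossing_edge_bound uv by blast
qed

lemma triangle_cover:
  assumes uvw: "u \<in> B" "v \<in> B" "w \<in> B" and "w \<in> N u v"
  shows "A \<subseteq> (A - N u v) \<union> (A - N u w) \<union> (A - N v w)"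
proof
  fix z assume z: "z \<in> A"
  have edge: "{u,v,w} \<in> G" using \<open>w \<in> N u v\<close> by (simp add: pair_nbhd_def)
  then have "card {u,v,w} = 3" using graph by (auto simp: is_3graph_def)
  moreover have "{u,v,w,z} \<inter> A = {z}" "{u,v,w,z} \<inter> B = {u,v,w}"
    using uvw z partition disjoint by auto
  ultimately have "z \<notin> N u v \<inter> N u w \<inter> N v w"
    using not_in_common_pair_nbhd[OF edge] by simp
  with z show "z \<in> (A - N u v) \<union> (A - N u w) \<union> (A - N v w)" by blast
qed

lemma quarter_lt_card_A:
  assumes cV: "card V = 4 * m" and d: "d + 1 = 3 * m" and "x \<in> A" "u \<in> B"
  shows "m < card A"
proof (rule ccontr)
  assume small: "\<not> m < card A"
  have xu: "x \<in> V" "u \<in> V" "x \<noteq> u" using assms partition disjoint by auto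
  have "A - {x,u} = A - {x}" using \<open>u \<in> B\<close> disjoint by blast
  moreover have "0 < card A" using \<open>x \<in> A\<close> finite_A card_gt_0_iff by blast
  ultimately have "card (A - {x,u}) < d"
    using small d \<open>x \<in> A\<close> finite_A by (simp add: card_Diff_singleton)
  then have "\<not> N x u \<subseteq> A" using xu partition by (intro pair_nbhd_not_subset) auto
  then obtain v where v: "v \<in> B" "v \<in> N x u"
    using pair_nbhd_subset[OF graph] partition by blast
  then have "v \<noteq> u" using pair_nbhd_subset[OF graph] by blast
  moreover have "x \<in> N u v" using v \<open>x \<in> A\<close> partition
    by (auto simp: pair_nbhd_def insert_commute)
  ultimately have "card B + 3 * d + 4 \<le> 3 * card V"
    using crossing_edge_bound \<open>x \<in> A\<close> \<open>u \<in> B\<close> v(1) by fastforce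
  then show False using card_A_B cV d small by linarith
qed

lemma card_A_ge_three_eighths:
  assumes cV: "card V = 4 * m" and d: "d + 1 = 3 * m"
    and "m < card A" "card A < d" "2 \<le> card B"
  shows "3 * m + 3 \<le> 2 * card A"
proof -
  have B_small: "card B < d + 2" using card_A_B assms by linarith
  obtain T where "T \<subseteq> B" "card T = 2"
    using obtain_subset_with_card_n[OF \<open>2 \<le> card B\<close>] by blast
  then obtain u v where uv: "u \<in> B" "v \<in> B" "u \<noteq> v" by (auto simp: card_2_iff)
  have "A - {u,v} = A" using uv disjoint by blast
  then have "card (A - {u,v}) < d" using \<open>card A < d\<close> by simp
  then have "\<not> N u v \<subseteq> A" using uv partition by (intro pair_nbhd_not_subset) auto
  then obtain w where w: "w \<in> B" "w \<in> N u v"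
    using pair_nbhd_subset[OF graph] partition by blast
  then have "u \<noteq> w" "v \<noteq> w" using pair_nbhd_subset[OF graph] by auto
  have bounds: "card B + card (A - N p q) + 3 * d + 4 \<le> 3 * card V"
    if "p \<in> B" "q \<in> B" "p \<noteq> q" for p q
    using pair_in_B_bound[OF that B_small] .
  have "card A \<le> card ((A - N u v) \<union> (A - N u w) \<union> (A - N v w))"
    using triangle_cover[OF uv(1,2) w] finite_A by (intro card_mono) auto
  also have "\<dots> \<le> card (A - N u v) + card (A - N u w) + card (A - N v w)"
    by (meson card_Un_le add_le_mono order_trans le_refl)
  finally show ?thesis
    using bounds[OF uv] bounds[OF uv(1) w(1) \<open>u \<noteq> w\<close>] bounds[OF uv(2) w(1) \<open>v \<noteq> w\<close>]
      card_A_B cV d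
    by linarith
qed

end

theorem lemma8p10:
  fixes V :: "'a set" and G :: "'a set set" and A B :: "'a set"
  assumes "finite V"
    and "is_3graph V G"
    and "4 dvd card V"
    and "min_codeg_ge V G (3 * real (card V) / 4 - 1)"
    and "A \<union> B = V" and "A \<inter> B = {}"
    and "3 * real (card V) / 16 < real (card A)"
    and "real (card A) < 5 * real (card V) / 16"
  shows "\<exists>S. is_K4 G S \<and> odd (card (S \<inter> A)) \<and> odd (card (S \<inter> B))"
proof (rule ccontr)
  assume no_odd_K4: "\<not> ?thesis"
  obtain m where cV: "card V = 4 * m" using assms(3) by blast
  have "3 * real m < 4 * real (card A)" "4 * real (card A) < 5 * real m"
    using assms(7,8) cV by simp_all
  then have A_bounds: "3 * m < 4 * card A" "4 * card A < 5 * m" by linarith+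
  define d where "d = 3 * m - 1"
  have d: "d + 1 = 3 * m" using A_bounds by (simp add: d_def)
  have codeg: "d \<le> codeg G x y" if "x \<in> V" "y \<in> V" "x \<noteq> y" for x y
  proof -
    have "3 * real m - 1 \<le> real (codeg G x y)"
      using assms(4) that cV by (simp add: min_codeg_ge_def)
    then show ?thesis unfolding d_def by linarith
  qed
  interpret odd_K4_free V G A B d
    by unfold_locales (use assms(1,2,5,6) codeg no_odd_K4 in auto)
  have card_A_B_eq: "card A + card B = 4 * m" using card_A_B cV by simp
  then obtain x u where "x \<in> A" "u \<in> B" using A_bounds by fastforce
  then have "m < card A" using quarter_lt_card_A[OF cV d] by blast
  moreover have "card A < d" "2 \<le> card B" using A_bounds d card_A_B_eq \<open>m < card A\<close> by linarith+
  ultimately have "3 * m + 3 \<le> 2 * card A" using card_A_ge_three_eighths[OF cV d] by blast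
  then show False using A_bounds by linarith
qed

end
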